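(* Let $\psi\in\mathcal K^\star$ have radius of convergence $R_\psi>0$, apex $\tau$ and Khinchin family $(Y_t)$. For $t\in(0,R_\psi)$ let $q(t)$ be the extinction probability of the Galton–Watson process with offspring distribution $Y_t$. Then $q(t)\le\tau/t$ for every $t\in(0,R_\psi)$.
   Context: $\mathcal K$ is the class of non-constant power series $f(z)=\sum_{n\ge0}a_nz^n$ with positive radius of convergence $R$, non-negative coefficients and $a_0>0$; its Khinchin family $(X_t)$ is given by $\mathbf P(X_t=n)=a_nt^n/f(t)$ for $n\ge0$, $t\in(0,R)$, with mean $m_f(t)=tf'(t)/f(t)$ (increasing in $t$). $\mathcal K^\star$ is the subclass of $f\in\mathcal K$ with $\lim_{t\uparrow R}m_f(t)>1$; the apex is the unique $\tau\in(0,R)$ with $m_f(\tau)=1$. The extinction probability is the probability that the Galton–Watson tree is finite. *)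

theory Defs
  imports "HOL-Analysis.Analysis" "HOL-Probability.Probability"
begin

definition pseries :: "(nat \<Rightarrow> real) \<Rightarrow> real \<Rightarrow> real" where
  "pseries a t = (\<Sum>n. a n * t ^ n)"

definition khinchin_class :: "(nat \<Rightarrow> real) \<Rightarrow> bool" where
  "khinchin_class a \<longleftrightarrow> conv_radius a > 0 \<and> (\<forall>n. a n \<ge> 0) \<and> a 0 > 0
     \<and> (\<exists>n\<ge>1. a n \<noteq> 0)"

definition kmean :: "(nat \<Rightarrow> real) \<Rightarrow> real \<Rightarrow> real" where
  "kmean a t = t * deriv (pseries a) t / pseries a t"

definition kdomain :: "(nat \<Rightarrow> real) \<Rightarrow> real set" where
  "kdomain a = {t. 0 < t \<and> ereal t < conv_radius a}"

text \<open>K*: the limit of the (increasing) mean as t tends to R from below exceeds 1;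
  for an increasing function this limit is the supremum over (0,R).\<close>
definition kstar_class :: "(nat \<Rightarrow> real) \<Rightarrow> bool" where
  "kstar_class a \<longleftrightarrow> khinchin_class a \<and> (SUP t\<in>kdomain a. ereal (kmean a t)) > 1"

definition apex :: "(nat \<Rightarrow> real) \<Rightarrow> real" where
  "apex a = (THE \<tau>. \<tau> \<in> kdomain a \<and> kmean a \<tau> = 1)"

definition khinchin_pmf :: "(nat \<Rightarrow> real) \<Rightarrow> real \<Rightarrow> nat pmf" where
  "khinchin_pmf a t = embed_pmf (\<lambda>n. a n * t ^ n / pseries a t)"

fun iid_sum_pmf :: "nat pmf \<Rightarrow> nat \<Rightarrow> nat pmf" where
  "iid_sum_pmf p 0 = return_pmf 0"
| "iid_sum_pmf p (Suc k) = bind_pmf (iid_sum_pmf p k) (\<lambda>s. map_pmf (\<lambda>x. s + x) p)"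

fun gw_generation :: "nat pmf \<Rightarrow> nat \<Rightarrow> nat pmf" where
  "gw_generation p 0 = return_pmf 1"
| "gw_generation p (Suc n) = bind_pmf (gw_generation p n) (iid_sum_pmf p)"

text \<open>Extinction probability: P(tree finite) = P(\<exists>n. Z_n = 0) = lim_n P(Z_n = 0),
  the events {Z_n = 0} being increasing.\<close>
definition extinction_prob :: "nat pmf \<Rightarrow> real" where
  "extinction_prob p = lim (\<lambda>n. pmf (gw_generation p n) 0)"

end

theory Submission
  imports Defs
begin

text \<open>
  Let \<open>f\<close> be the power series and \<open>\<tau>\<close> its apex. For \<open>t \<le> \<tau>\<close> the bound is at least 1. For
  \<open>t > \<tau>\<close> put \<open>c = \<tau> / t < 1\<close>. The generating function of \<open>Y\<^sub>t\<close> is \<open>\<phi>(s) = f(s t) / f(t)\<close>, so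
  \<open>\<phi>(c) = f(\<tau>) / f(t)\<close>, and \<open>\<phi>(c) \<le> c\<close> amounts to \<open>f(x) / x\<close> being non-decreasing on \<open>[\<tau>, R)\<close>;
  this follows termwise from Bernoulli's inequality, because \<open>\<tau> f'(\<tau>) = f(\<tau>)\<close>, i.e.
  \<open>\<Sum> (n - 1) a\<^sub>n \<tau>\<^sup>n = 0\<close>. Since the generating function of the generation \<open>Z\<^sub>k\<^sub>+\<^sub>1\<close> is that of
  \<open>Z\<^sub>k\<close> composed with \<open>\<phi>\<close>, induction gives \<open>P(Z\<^sub>k = 0) \<le> E[c ^ Z\<^sub>k] \<le> c\<close> for all \<open>k\<close>.
\<close>

lemma conv_radius_diffs_ge:
  fixes a :: "nat \<Rightarrow> 'a::{banach, real_normed_field}"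
  shows "conv_radius a \<le> conv_radius (diffs a)"
proof -
  have "fps_nth (fps_deriv (Abs_fps a)) = diffs a"
    by (simp add: fun_eq_iff diffs_def)
  then show ?thesis
    using fps_conv_radius_deriv[of "Abs_fps a"] by (simp add: fps_conv_radius_def)
qed

lemma sums_pseries:
  assumes "ereal \<bar>x\<bar> < conv_radius a"
  shows "(\<lambda>n. a n * x ^ n) sums pseries a x"
  unfolding pseries_def using assms by (intro summable_sums summable_in_conv_radius) simp

lemma pseries_has_field_derivative:
  assumes "ereal \<bar>x\<bar> < conv_radius a"
  shows "(pseries a has_field_derivative pseries (diffs a) x) (at x within A)"
  unfolding pseries_def[abs_def] using assms by (intro has_field_derivative_powser) simp

lemma isCont_pseries:
  assumes "ereal \<bar>x\<bar> < conv_radius a"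
  shows "isCont (pseries a) x"
  using pseries_has_field_derivative[OF assms] by (rule DERIV_isCont)

lemma pseries_ge_const_coeff:
  assumes "\<And>n. 0 \<le> a n" and "0 \<le> x" and "ereal x < conv_radius a"
  shows "a 0 \<le> pseries a x"
proof -
  have "(\<Sum>n<1. a n * x ^ n) \<le> pseries a x"
    unfolding pseries_def using assms
    by (intro sum_le_suminf summable_in_conv_radius) auto
  then show ?thesis by simp
qed

lemma khinchin_pseries_pos:
  assumes "khinchin_class a" and "0 \<le> x" and "ereal x < conv_radius a"
  shows "0 < pseries a x"
  using pseries_ge_const_coeff[of a x] assms unfolding khinchin_class_def by fastforce

text \<open>\<open>x f'(x) - f(x) = f(x) (m(x) - 1)\<close>: the sign compares the mean \<open>m(x)\<close> with 1.\<close>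

definition mean_excess :: "(nat \<Rightarrow> real) \<Rightarrow> real \<Rightarrow> real" where
  "mean_excess a x = x * pseries (diffs a) x - pseries a x"

lemma mean_excess_0: "mean_excess a 0 = - a 0"
  by (simp add: mean_excess_def pseries_def)

lemma isCont_mean_excess:
  assumes "ereal \<bar>x\<bar> < conv_radius a"
  shows "isCont (mean_excess a) x"
proof -
  have "ereal \<bar>x\<bar> < conv_radius (diffs a)"
    using assms conv_radius_diffs_ge[of a] by (rule less_le_trans)
  then show ?thesis
    unfolding mean_excess_def[abs_def]
    using assms by (intro continuous_intros isCont_pseries)
qed

lemma sums_mean_excess:
  assumes "ereal \<bar>x\<bar> < conv_radius a"
  shows "(\<lambda>n. (real n - 1) * a n * x ^ n) sums mean_excess a x"
proof -
  have "ereal \<bar>x\<bar> < conv_radius (diffs a)"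
    using assms conv_radius_diffs_ge[of a] by (rule less_le_trans)
  then have "(\<lambda>n. x * (diffs a n * x ^ n)) sums (x * pseries (diffs a) x)"
    by (intro sums_mult sums_pseries)
  also have "(\<lambda>n. x * (diffs a n * x ^ n)) = (\<lambda>n. real (Suc n) * a (Suc n) * x ^ Suc n)"
    by (simp add: fun_eq_iff diffs_def algebra_simps)
  finally have "(\<lambda>n. real n * a n * x ^ n) sums (x * pseries (diffs a) x)"
    using sums_Suc_iff[of "\<lambda>n. real n * a n * x ^ n"] by simp
  from sums_diff[OF this sums_pseries[OF assms]] show ?thesis
    by (simp add: mean_excess_def algebra_simps)
qed

lemma kmean_eq_mean_excess:
  assumes "khinchin_class a" and "0 \<le> x" and "ereal x < conv_radius a"
  shows "kmean a x = 1 + mean_excess a x / pseries a x"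
proof -
  have "deriv (pseries a) x = pseries (diffs a) x"
    using assms by (intro DERIV_imp_deriv pseries_has_field_derivative) simp
  then show ?thesis
    using khinchin_pseries_pos[OF assms]
    by (simp add: kmean_def mean_excess_def field_simps)
qed

lemma
  assumes "khinchin_class a" and "0 \<le> x" and "ereal x < conv_radius a"
  shows kmean_eq_1_iff: "kmean a x = 1 \<longleftrightarrow> mean_excess a x = 0"
    and one_less_kmean_iff: "1 < kmean a x \<longleftrightarrow> 0 < mean_excess a x"
  using kmean_eq_mean_excess[OF assms] khinchin_pseries_pos[OF assms]
  by (simp_all add: zero_less_divide_iff)

lemma mean_excess_eq_neg_const_coeff:
  assumes "\<And>n. 2 \<le> n \<Longrightarrow> a n = 0" and "ereal \<bar>x\<bar> < conv_radius a"
  shows "mean_excess a x = - a 0"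
proof -
  have "(\<lambda>n. (real n - 1) * a n * x ^ n) = (\<lambda>n. if n = 0 then - a 0 else 0)"
    using assms(1) by (auto simp: fun_eq_iff numeral_2_eq_2 not_less_eq_eq le_Suc_eq)
  then show ?thesis
    using sums_mean_excess[OF assms(2)] sums_single[of 0 "\<lambda>_. - a 0"] by (simp add: sums_unique2)
qed

text \<open>The terms \<open>(n - 1) a\<^sub>n x\<^sup>n\<close> of \<open>mean_excess a x\<close> are non-decreasing in \<open>x \<ge> 0\<close>, and
  constant only when \<open>a\<^sub>n = 0\<close> for all \<open>n \<ge> 2\<close>; then \<open>mean_excess a = -a\<^sub>0 < 0\<close>.\<close>

lemma mean_excess_strict_mono_from_nonneg:
  assumes "khinchin_class a" and "0 \<le> s1" "s1 < s2" "ereal s2 < conv_radius a"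
    and "0 \<le> mean_excess a s1"
  shows "mean_excess a s1 < mean_excess a s2"
proof (rule ccontr)
  assume not_less: "\<not> ?thesis"
  have coeffs: "\<And>n. 0 \<le> a n" "0 < a 0" using assms(1) by (auto simp: khinchin_class_def)
  have R1: "ereal \<bar>s1\<bar> < conv_radius a" and R2: "ereal \<bar>s2\<bar> < conv_radius a"
    using assms(2-4) by (auto intro: le_less_trans[of _ "ereal s2"])
  define d where "d n = (real n - 1) * a n * (s2 ^ n - s1 ^ n)" for n
  have "d = (\<lambda>n. (real n - 1) * a n * s2 ^ n - (real n - 1) * a n * s1 ^ n)"
    by (simp add: fun_eq_iff d_def algebra_simps)
  then have d_sums: "d sums (mean_excess a s2 - mean_excess a s1)"
    using sums_diff[OF sums_mean_excess[OF R2] sums_mean_excess[OF R1]] by simp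
  have d_nonneg: "0 \<le> d n" for n
  proof (cases "n = 0")
    case False
    have "s1 ^ n \<le> s2 ^ n" using assms(2,3) by (intro power_mono) auto
    with False coeffs(1)[of n] show ?thesis by (simp add: d_def)
  qed (simp add: d_def)
  have "mean_excess a s2 - mean_excess a s1 = 0"
    using not_less sums_le[OF d_nonneg sums_zero d_sums] by linarith
  then have d_zero: "d n = 0" for n
    using d_sums d_nonneg suminf_eq_zero_iff[of d] by (simp add: sums_iff)
  have "a n = 0" if "2 \<le> n" for n
  proof -
    have "s1 ^ n < s2 ^ n" using that assms(2,3) by (intro power_strict_mono) auto
    moreover have "1 < real n" using that by simp
    ultimately show ?thesis using d_zero[of n] by (simp add: d_def)
  qed
  then have "mean_excess a s1 = - a 0" using R1 by (rule mean_excess_eq_neg_const_coeff)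
  with assms(5) coeffs(2) show False by simp
qed

lemma kmean_eq_1_unique:
  assumes "khinchin_class a"
    and "x \<in> kdomain a" "kmean a x = 1" and "y \<in> kdomain a" "kmean a y = 1"
  shows "x = y"
proof -
  have "mean_excess a x = 0" "mean_excess a y = 0"
    using assms kmean_eq_1_iff[OF assms(1)] by (simp_all add: kdomain_def)
  then show ?thesis
    using mean_excess_strict_mono_from_nonneg[OF assms(1), of x y]
      mean_excess_strict_mono_from_nonneg[OF assms(1), of y x] assms(2,4)
    by (cases x y rule: linorder_cases) (auto simp: kdomain_def)
qed

lemma kstar_ex_kmean_eq_1:
  assumes "kstar_class a"
  shows "\<exists>\<tau>\<in>kdomain a. kmean a \<tau> = 1"
proof -
  have K: "khinchin_class a" and "1 < (SUP t\<in>kdomain a. ereal (kmean a t))"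
    using assms by (auto simp: kstar_class_def)
  then obtain s where s: "0 < s" "ereal s < conv_radius a" "1 < kmean a s"
    by (auto simp: less_SUP_iff kdomain_def)
  have "mean_excess a 0 < 0"
    using K by (simp add: mean_excess_0 khinchin_class_def)
  moreover have "0 < mean_excess a s"
    using s one_less_kmean_iff[OF K] by simp
  moreover have "continuous_on {0..s} (mean_excess a)"
    using s(2) by (intro continuous_at_imp_continuous_on ballI isCont_mean_excess)
      (auto intro: le_less_trans[of _ "ereal s"])
  ultimately obtain \<tau> where \<tau>: "0 \<le> \<tau>" "\<tau> \<le> s" "mean_excess a \<tau> = 0"
    using IVT'[of "mean_excess a" 0 0 s] s(1) by force
  have "\<tau> \<noteq> 0" using \<tau>(3) \<open>mean_excess a 0 < 0\<close> by auto
  moreover have "ereal \<tau> < conv_radius a"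
    using \<tau>(2) by (intro le_less_trans[OF _ s(2)]) simp
  ultimately show ?thesis
    using \<tau> kmean_eq_1_iff[OF K, of \<tau>] by (intro bexI[of _ \<tau>]) (auto simp: kdomain_def)
qed

lemma
  assumes "kstar_class a"
  shows apex_in_kdomain: "apex a \<in> kdomain a"
    and kmean_apex: "kmean a (apex a) = 1"
proof -
  have K: "khinchin_class a" using assms by (simp add: kstar_class_def)
  have "\<exists>!\<tau>. \<tau> \<in> kdomain a \<and> kmean a \<tau> = 1"
    using kstar_ex_kmean_eq_1[OF assms] kmean_eq_1_unique[OF K] by blast
  from theI'[OF this] show "apex a \<in> kdomain a" "kmean a (apex a) = 1"
    by (simp_all add: apex_def)
qed

lemma power_mult_diff_ge:
  fixes x y :: real
  assumes "0 < x" and "x \<le> y"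
  shows "(real n - 1) * x ^ n * (y - x) \<le> x * y ^ n - y * x ^ n"
proof -
  define h where "h = y / x - 1"
  have y_eq: "y = x * (1 + h)" using assms(1) by (simp add: h_def)
  have "1 + real n * h \<le> (1 + h) ^ n"
    using assms by (intro Bernoulli_inequality) (simp add: h_def)
  then have "x ^ Suc n * (1 + real n * h) \<le> x ^ Suc n * (1 + h) ^ n"
    using assms(1) by (intro mult_left_mono) auto
  moreover have "x * y ^ n - y * x ^ n - (real n - 1) * x ^ n * (y - x)
      = x ^ Suc n * (1 + h) ^ n - x ^ Suc n * (1 + real n * h)"
    unfolding y_eq power_mult_distrib by (simp add: algebra_simps)
  ultimately show ?thesis by linarith
qed

lemma mult_pseries_le_of_mean_excess_nonneg:
  assumes "\<And>n. 0 \<le> a n" and "0 < x" "x \<le> t" "ereal t < conv_radius a"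
    and "0 \<le> mean_excess a x"
  shows "t * pseries a x \<le> x * pseries a t"
proof -
  have Rt: "ereal \<bar>t\<bar> < conv_radius a"
    using assms(2-4) by simp
  have Rx: "ereal \<bar>x\<bar> < conv_radius a"
    using assms(2,3) by (intro le_less_trans[OF _ Rt]) simp
  have termwise: "(t - x) * ((real n - 1) * a n * x ^ n) \<le> x * (a n * t ^ n) - t * (a n * x ^ n)" for n
    using mult_left_mono[OF power_mult_diff_ge[OF assms(2,3), of n] assms(1)[of n]]
    by (simp add: algebra_simps)
  moreover have "(\<lambda>n. (t - x) * ((real n - 1) * a n * x ^ n)) sums ((t - x) * mean_excess a x)"
    by (intro sums_mult sums_mean_excess Rx)
  moreover have "(\<lambda>n. x * (a n * t ^ n) - t * (a n * x ^ n)) sums (x * pseries a t - t * pseries a x)"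
    by (intro sums_diff sums_mult sums_pseries Rt Rx)
  ultimately have "(t - x) * mean_excess a x \<le> x * pseries a t - t * pseries a x"
    by (rule sums_le)
  moreover have "0 \<le> (t - x) * mean_excess a x" using assms(3,5) by simp
  ultimately show ?thesis by linarith
qed

lemma mult_pseries_apex_le:
  assumes "kstar_class a" and "apex a \<le> t" "ereal t < conv_radius a"
  shows "t * pseries a (apex a) \<le> apex a * pseries a t"
proof -
  have K: "khinchin_class a" using assms(1) by (simp add: kstar_class_def)
  have "0 < apex a" "ereal (apex a) < conv_radius a"
    using apex_in_kdomain[OF assms(1)] by (auto simp: kdomain_def)
  moreover from this have "mean_excess a (apex a) = 0"
    using kmean_apex[OF assms(1)] kmean_eq_1_iff[OF K] by simp
  ultimately show ?thesis
    using K assms(2,3) by (intro mult_pseries_le_of_mean_excess_nonneg) (auto simp: khinchin_class_def)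
qed

lemma nn_integral_count_space_nat_sums:
  fixes f :: "nat \<Rightarrow> real"
  assumes "\<And>n. 0 \<le> f n" and "f sums s"
  shows "(\<integral>\<^sup>+n. ennreal (f n) \<partial>count_space UNIV) = ennreal s"
  using assms by (simp add: nn_integral_count_space_nat suminf_ennreal2 sums_iff)

lemma pmf_khinchin_pmf:
  assumes "khinchin_class a" and "0 \<le> t" "ereal t < conv_radius a"
  shows "pmf (khinchin_pmf a t) n = a n * t ^ n / pseries a t"
proof -
  have pos: "0 < pseries a t" by (rule khinchin_pseries_pos[OF assms])
  have nonneg: "0 \<le> a n * t ^ n / pseries a t" for n
    using assms(1,2) pos by (simp add: khinchin_class_def)
  have "(\<lambda>n. a n * t ^ n / pseries a t) sums (pseries a t / pseries a t)"
    using assms(2,3) by (intro sums_divide sums_pseries) simp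
  then have "(\<integral>\<^sup>+n. ennreal (a n * t ^ n / pseries a t) \<partial>count_space UNIV) = 1"
    using nonneg pos by (simp add: nn_integral_count_space_nat_sums)
  then show ?thesis
    unfolding khinchin_pmf_def using nonneg by (subst pmf_embed_pmf) auto
qed

lemma nn_integral_khinchin_pmf_power:
  assumes "khinchin_class a" and "0 < t" "ereal t < conv_radius a" and "0 \<le> c" "c \<le> 1"
  shows "(\<integral>\<^sup>+n. ennreal (c ^ n) \<partial>khinchin_pmf a t) = ennreal (pseries a (c * t) / pseries a t)"
proof -
  have pmf_times_power: "pmf (khinchin_pmf a t) n * c ^ n = a n * (c * t) ^ n / pseries a t" for n
    using assms(2) by (simp add: pmf_khinchin_pmf[OF assms(1) _ assms(3)] power_mult_distrib)
  have "ereal \<bar>c * t\<bar> < conv_radius a"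
    using assms(2,4,5) mult_left_le_one_le[of t c]
    by (intro le_less_trans[OF _ assms(3)]) (simp add: abs_mult)
  then have "(\<lambda>n. a n * (c * t) ^ n / pseries a t) sums (pseries a (c * t) / pseries a t)"
    by (intro sums_divide sums_pseries)
  moreover have "0 \<le> a n * (c * t) ^ n / pseries a t" for n
    using pmf_times_power[of n, symmetric] assms(4) by simp
  ultimately show ?thesis
    by (simp add: nn_integral_measure_pmf pmf_times_power nn_integral_count_space_nat_sums
        flip: ennreal_mult')
qed

lemma nn_integral_iid_sum_pmf_power:
  fixes c :: real and p :: "nat pmf"
  assumes "0 \<le> c"
  shows "(\<integral>\<^sup>+n. ennreal (c ^ n) \<partial>iid_sum_pmf p k) = (\<integral>\<^sup>+n. ennreal (c ^ n) \<partial>p) ^ k"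
proof (induction k)
  case (Suc k)
  have "(\<integral>\<^sup>+n. ennreal (c ^ n) \<partial>iid_sum_pmf p (Suc k))
      = (\<integral>\<^sup>+s. (\<integral>\<^sup>+n. ennreal (c ^ s) * ennreal (c ^ n) \<partial>p) \<partial>iid_sum_pmf p k)"
    using assms by (simp add: power_add ennreal_mult)
  also have "\<dots> = (\<integral>\<^sup>+s. ennreal (c ^ s) \<partial>iid_sum_pmf p k) * (\<integral>\<^sup>+n. ennreal (c ^ n) \<partial>p)"
    by (simp add: nn_integral_cmult nn_integral_multc)
  finally show ?case using Suc by (simp add: mult.commute)
qed simp

lemma nn_integral_gw_generation_power_le:
  fixes c :: real and p :: "nat pmf"
  assumes "0 \<le> c" and "(\<integral>\<^sup>+n. ennreal (c ^ n) \<partial>p) \<le> ennreal c"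
  shows "(\<integral>\<^sup>+n. ennreal (c ^ n) \<partial>gw_generation p k) \<le> ennreal c"
proof (induction k)
  case (Suc k)
  have "(\<integral>\<^sup>+n. ennreal (c ^ n) \<partial>gw_generation p (Suc k))
      = (\<integral>\<^sup>+m. (\<integral>\<^sup>+n. ennreal (c ^ n) \<partial>p) ^ m \<partial>gw_generation p k)"
    using nn_integral_iid_sum_pmf_power[OF assms(1)] by simp
  also have "\<dots> \<le> (\<integral>\<^sup>+m. ennreal (c ^ m) \<partial>gw_generation p k)"
    using assms by (intro nn_integral_mono) (simp add: power_mono flip: ennreal_power)
  finally show ?case using Suc by simp
qed simp

lemma incseq_pmf_gw_generation_0: "incseq (\<lambda>k. pmf (gw_generation p k) 0)"
proof (rule incseq_SucI)
  fix k
  have "ennreal (pmf (gw_generation p k) 0) = (\<integral>\<^sup>+m. indicator {0} m \<partial>gw_generation p k)"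
    by (simp add: emeasure_pmf_single)
  also have "\<dots> \<le> (\<integral>\<^sup>+m. ennreal (pmf (iid_sum_pmf p m) 0) \<partial>gw_generation p k)"
    by (intro nn_integral_mono) (simp split: split_indicator)
  also have "\<dots> = ennreal (pmf (gw_generation p (Suc k)) 0)"
    by (simp add: ennreal_pmf_bind)
  finally show "pmf (gw_generation p k) 0 \<le> pmf (gw_generation p (Suc k)) 0"
    by (simp add: ennreal_le_iff)
qed

lemma extinction_prob_le:
  fixes c :: real and p :: "nat pmf"
  assumes "0 \<le> c" and "(\<integral>\<^sup>+n. ennreal (c ^ n) \<partial>p) \<le> ennreal c"
  shows "extinction_prob p \<le> c"
proof -
  define q where "q k = pmf (gw_generation p k) 0" for k
  have q_le: "q k \<le> c" for k
  proof -
    have "ennreal (q k) = (\<integral>\<^sup>+n. indicator {0} n \<partial>gw_generation p k)"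
      by (simp add: q_def emeasure_pmf_single)
    also have "\<dots> \<le> (\<integral>\<^sup>+n. ennreal (c ^ n) \<partial>gw_generation p k)"
      by (intro nn_integral_mono) (simp split: split_indicator)
    also have "\<dots> \<le> ennreal c"
      by (rule nn_integral_gw_generation_power_le[OF assms])
    finally show ?thesis using assms(1) by (auto simp: ennreal_le_iff2)
  qed
  have "q \<longlonglongrightarrow> (SUP k. q k)"
    using incseq_pmf_gw_generation_0[of p] unfolding q_def[abs_def]
    by (intro LIMSEQ_incseq_SUP bdd_aboveI[of _ 1]) (auto simp: pmf_le_1)
  then have "extinction_prob p = (SUP k. q k)"
    by (simp add: extinction_prob_def q_def[abs_def] limI)
  also have "\<dots> \<le> c" using q_le by (intro cSUP_least) auto
  finally show ?thesis .
qed

theorem lemma6p7: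
  fixes a :: "nat \<Rightarrow> real" and t :: real
  assumes "kstar_class a"
    and "0 < t" and "ereal t < conv_radius a"
  shows "extinction_prob (khinchin_pmf a t) \<le> apex a / t"
proof (cases "t \<le> apex a")
  case True
  have "extinction_prob (khinchin_pmf a t) \<le> 1"
    by (rule extinction_prob_le) simp_all
  also have "1 \<le> apex a / t" using True assms(2) by simp
  finally show ?thesis .
next
  case False
  have K: "khinchin_class a" using assms(1) by (simp add: kstar_class_def)
  define c where "c = apex a / t"
  have c: "0 \<le> c" "c \<le> 1" "c * t = apex a"
    using False assms(2) apex_in_kdomain[OF assms(1)] by (auto simp: c_def kdomain_def)
  have "t * pseries a (apex a) \<le> apex a * pseries a t"
    using False by (intro mult_pseries_apex_le assms(1,3)) simp
  then have "pseries a (apex a) / pseries a t \<le> c"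
    using khinchin_pseries_pos[OF K _ assms(3)] assms(2) by (simp add: c_def field_simps)
  then have "(\<integral>\<^sup>+n. ennreal (c ^ n) \<partial>khinchin_pmf a t) \<le> ennreal c"
    using nn_integral_khinchin_pmf_power[OF K assms(2,3) c(1,2)] c(3) by (simp add: ennreal_leI)
  then show ?thesis
    using extinction_prob_le[OF c(1)] by (simp add: c_def)
qed

end
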